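(* Let $\Gamma$ be a finite connected graph, let $\emptyset\ne Y\subset Z$ be subsets of its vertex set, and let $s$ be a nonnegative integer-valued function on the vertices. Let $H_w(s,Y)$ be the expected number of particles stopping in $Y$ if $s(x)$ particles start at each vertex $x$ and perform independent simple random walks stopped on first hitting $Z$, and let $H_r(s,Y)$ be the number of particles stopping in $Y$ if instead they perform rotor-router walks (one at a time, rotors not reset) stopped on first hitting $Z$. Let $H(x)=H_w(1_x,Y)$. Then $$|H_r(s,Y)-H_w(s,Y)|\le\sum_{u}\sum_{v\sim u}|H(u)-H(v)|,$$ independently of $s$, of the initial rotor configuration, and of the cyclic orderings.
   Context: Rotor-router walk on $\Gamma$: each vertex has a fixed cyclic ordering of its neighbors and a rotor pointing to one of them; a particle at $u$ advances the rotor at $u$ to the next neighbor in the cyclic order and then moves to that neighbor. The outer sum is over all vertices $u$ of $\Gamma$ and the inner sum over neighbors $v$ of $u$. *)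

theory Defs
  imports Complex_Main
begin

definition finite_graph :: "'a set \<Rightarrow> ('a \<Rightarrow> 'a \<Rightarrow> bool) \<Rightarrow> bool" where
  "finite_graph V E \<longleftrightarrow> finite V \<and> (\<forall>u v. E u v \<longrightarrow> u \<in> V \<and> v \<in> V)
     \<and> (\<forall>u v. E u v \<longrightarrow> E v u) \<and> (\<forall>u. \<not> E u u)"

definition connected_graph :: "'a set \<Rightarrow> ('a \<Rightarrow> 'a \<Rightarrow> bool) \<Rightarrow> bool" where
  "connected_graph V E \<longleftrightarrow> (\<forall>u\<in>V. \<forall>v\<in>V. E\<^sup>*\<^sup>* u v)"

text \<open>Probability that a simple random walk started at x, stopped on first hitting Z,
  has stopped in Y within n steps.\<close>
fun hitp :: "('a \<Rightarrow> 'a \<Rightarrow> bool) \<Rightarrow> 'a set \<Rightarrow> 'a set \<Rightarrow> nat \<Rightarrow> 'a \<Rightarrow> real" where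
  "hitp E Z Y 0 x = (if x \<in> Y then 1 else 0)"
| "hitp E Z Y (Suc n) x =
     (if x \<in> Z then (if x \<in> Y then 1 else 0)
      else (\<Sum>v\<in>{v. E x v}. hitp E Z Y n v) / real (card {v. E x v}))"

definition hitprob :: "('a \<Rightarrow> 'a \<Rightarrow> bool) \<Rightarrow> 'a set \<Rightarrow> 'a set \<Rightarrow> 'a \<Rightarrow> real" where
  "hitprob E Z Y x = lim (\<lambda>n. hitp E Z Y n x)"

text \<open>H_w(s,Y): expected number of particles stopping in Y (linearity of expectation).\<close>
definition Hw :: "'a set \<Rightarrow> ('a \<Rightarrow> 'a \<Rightarrow> bool) \<Rightarrow> 'a set \<Rightarrow> 'a set \<Rightarrow> ('a \<Rightarrow> nat) \<Rightarrow> real" where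
  "Hw V E Z Y s = (\<Sum>x\<in>V. real (s x) * hitprob E Z Y x)"

text \<open>Cyclic ordering of neighbours: nbrs u lists the neighbours of u without repetition;
  successor of index i is (i+1) mod deg u.  A rotor configuration rho assigns to u an index
  rho u < length (nbrs u), i.e. the rotor points to nbrs u ! rho u.\<close>
definition cyclic_orders :: "'a set \<Rightarrow> ('a \<Rightarrow> 'a \<Rightarrow> bool) \<Rightarrow> ('a \<Rightarrow> 'a list) \<Rightarrow> bool" where
  "cyclic_orders V E nbrs \<longleftrightarrow> (\<forall>u\<in>V. distinct (nbrs u) \<and> set (nbrs u) = {v. E u v})"

definition valid_rotors :: "'a set \<Rightarrow> ('a \<Rightarrow> 'a list) \<Rightarrow> ('a \<Rightarrow> nat) \<Rightarrow> bool" where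
  "valid_rotors V nbrs rho \<longleftrightarrow> (\<forall>u\<in>V. rho u < length (nbrs u))"

inductive rwalk :: "('a \<Rightarrow> 'a list) \<Rightarrow> 'a set \<Rightarrow> ('a \<Rightarrow> nat) \<Rightarrow> 'a \<Rightarrow> 'a \<Rightarrow> ('a \<Rightarrow> nat) \<Rightarrow> bool"
  for nbrs :: "'a \<Rightarrow> 'a list" and Z :: "'a set" where
  stop: "x \<in> Z \<Longrightarrow> rwalk nbrs Z rho x x rho"
| move: "x \<notin> Z \<Longrightarrow>
     rwalk nbrs Z (rho(x := Suc (rho x) mod length (nbrs x)))
                  (nbrs x ! (Suc (rho x) mod length (nbrs x))) z rho' \<Longrightarrow>
     rwalk nbrs Z rho x z rho'"

inductive rrun :: "('a \<Rightarrow> 'a list) \<Rightarrow> 'a set \<Rightarrow> 'a set \<Rightarrow> ('a \<Rightarrow> nat) \<Rightarrow> 'a list \<Rightarrow> nat \<Rightarrow> ('a \<Rightarrow> nat) \<Rightarrow> bool"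
  for nbrs :: "'a \<Rightarrow> 'a list" and Z :: "'a set" and Y :: "'a set" where
  nil: "rrun nbrs Z Y rho [] 0 rho"
| cons: "rwalk nbrs Z rho x z rho1 \<Longrightarrow> rrun nbrs Z Y rho1 xs c rho2 \<Longrightarrow>
     rrun nbrs Z Y rho (x # xs) (c + (if z \<in> Y then 1 else 0)) rho2"

end

theory Submission
  imports Defs "HOL-Library.Infinite_Set"
begin

(* Let H be the probability that a random walk stopped on Z stops in Y; H is 1 on Y,
   0 on Z - Y, and harmonic (the average over the neighbours) off Z.  To a rotor at u
   pointing to the neighbour with index r we attach the weight
     rotor_potential u r = sum_{j=1..r} (H u - H (nbrs u ! j)),
   and to a rotor configuration the sum of these weights over all vertices.  Because H is
   harmonic off Z, advancing the rotor at u and moving along it changes the potential by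
   exactly H u - H (new position), so for a whole run
     (number of particles stopping in Y) + potential(final) = sum of H(start) + potential(initial).
   Since sum of H(start) is H_w(s,Y), the discrepancy is a difference of two potentials,
   which is bounded by sum_u sum_{v ~ u} |H u - H v|. *)

section \<open>Hitting probabilities\<close>

lemma hitp_nonneg: "0 \<le> hitp E Z Y n x"
  by (induction n arbitrary: x) (auto intro!: sum_nonneg divide_nonneg_nonneg)

lemma hitp_le_1: "hitp E Z Y n x \<le> 1"
proof (induction n arbitrary: x)
  case (Suc n)
  have "(\<Sum>v\<in>{v. E x v}. hitp E Z Y n v) \<le> real (card {v. E x v}) * 1"
    by (rule sum_bounded_above) (use Suc in auto)
  then show ?case by (auto simp: divide_le_eq)
qed auto

lemma hitp_Suc_ge: assumes "Y \<subseteq> Z" shows "hitp E Z Y n x \<le> hitp E Z Y (Suc n) x"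
proof (induction n arbitrary: x)
  case 0
  then show ?case using assms by (auto intro!: sum_nonneg divide_nonneg_nonneg hitp_nonneg)
next
  case (Suc n)
  then show ?case by (auto intro!: sum_mono divide_right_mono)
qed

text \<open>Monotone and bounded, the finite-horizon probabilities converge to \<open>hitprob\<close>.\<close>
lemma hitp_tendsto_hitprob:
  assumes "Y \<subseteq> Z" shows "(\<lambda>n. hitp E Z Y n x) \<longlonglongrightarrow> hitprob E Z Y x"
proof -
  have "incseq (\<lambda>n. hitp E Z Y n x)" using hitp_Suc_ge[OF assms] by (simp add: incseq_SucI)
  moreover have "bdd_above (range (\<lambda>n. hitp E Z Y n x))"
    by (rule bdd_aboveI[where M=1]) (auto simp: hitp_le_1)
  ultimately have "convergent (\<lambda>n. hitp E Z Y n x)"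
    using LIMSEQ_incseq_SUP convergent_def by blast
  then show ?thesis unfolding hitprob_def by (simp add: convergent_LIMSEQ_iff)
qed

lemma hitprob_boundary:
  assumes "x \<in> Z" shows "hitprob E Z Y x = (if x \<in> Y then 1 else 0)"
proof -
  have "hitp E Z Y n x = (if x \<in> Y then 1 else 0)" for n using assms by (cases n) auto
  then show ?thesis unfolding hitprob_def by simp
qed

text \<open>Harmonicity off \<open>Z\<close>: pass to the limit in the defining recursion of \<open>hitp\<close>.\<close>
lemma hitprob_harmonic:
  assumes "Y \<subseteq> Z" "x \<notin> Z" "card {v. E x v} \<noteq> 0"
  shows "hitprob E Z Y x = (\<Sum>v\<in>{v. E x v}. hitprob E Z Y v) / real (card {v. E x v})"
proof -
  have "(\<lambda>n. hitp E Z Y (Suc n) x) \<longlonglongrightarrow> hitprob E Z Y x"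
    using hitp_tendsto_hitprob[OF assms(1)] by (rule LIMSEQ_Suc)
  moreover have "(\<lambda>n. hitp E Z Y (Suc n) x)
      \<longlonglongrightarrow> (\<Sum>v\<in>{v. E x v}. hitprob E Z Y v) / real (card {v. E x v})"
    using assms(2,3) by (simp, intro tendsto_intros hitp_tendsto_hitprob[OF assms(1)], simp)
  ultimately show ?thesis using LIMSEQ_unique by blast
qed

section \<open>The rotor potential\<close>

definition rotor_potential :: "('a \<Rightarrow> 'a list) \<Rightarrow> ('a \<Rightarrow> real) \<Rightarrow> 'a \<Rightarrow> nat \<Rightarrow> real" where
  "rotor_potential nbrs H u r = (\<Sum>j<r. H u - H (nbrs u ! Suc j))"

definition config_potential ::
  "'a set \<Rightarrow> ('a \<Rightarrow> 'a list) \<Rightarrow> ('a \<Rightarrow> real) \<Rightarrow> ('a \<Rightarrow> nat) \<Rightarrow> real" where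
  "config_potential V nbrs H rho = (\<Sum>u\<in>V. rotor_potential nbrs H u (rho u))"

lemma sum_nth_distinct:
  assumes "distinct xs" shows "(\<Sum>j<length xs. g (xs ! j)) = (\<Sum>v\<in>set xs. g v)"
proof -
  have "set xs = nth xs ` {..<length xs}" by (auto simp: set_conv_nth)
  moreover have "inj_on (nth xs) {..<length xs}" using assms by (simp add: inj_on_nth)
  ultimately show ?thesis by (simp add: sum.reindex)
qed

text \<open>At a harmonic vertex the deviations from the neighbours sum to zero; this is what
  makes a full turn of the rotor leave the potential unchanged.\<close>
lemma harmonic_deviations_sum_zero:
  assumes "distinct ns" "set ns = N" "ns \<noteq> []" and "a = (\<Sum>v\<in>N. H v) / real (card N)"
  shows "(\<Sum>j<length ns. a - H (ns ! j)) = 0"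
proof -
  have card: "card N = length ns" using assms(1,2) distinct_card by blast
  have "(\<Sum>j<length ns. a - H (ns ! j)) = real (length ns) * a - (\<Sum>v\<in>N. H v)"
    using sum_nth_distinct[OF assms(1), of H] assms(2) by (simp add: sum_subtractf)
  also have "\<dots> = 0" using assms(3,4) card by simp
  finally show ?thesis .
qed

text \<open>Advancing a rotor changes its weight by \<open>H x - H (new target)\<close>; at the wrap-around
  this needs the deviations to sum to zero.\<close>
lemma rotor_potential_advance:
  assumes "r < length (nbrs x)" "(\<Sum>j<length (nbrs x). H x - H (nbrs x ! j)) = 0"
  defines "r' \<equiv> Suc r mod length (nbrs x)"
  shows "rotor_potential nbrs H x r' = rotor_potential nbrs H x r + H x - H (nbrs x ! r')"
proof (cases "Suc r < length (nbrs x)")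
  case True
  then show ?thesis by (simp add: rotor_potential_def r'_def)
next
  case False
  then have wrap: "Suc r = length (nbrs x)" using assms(1) by simp
  have "(\<Sum>j<Suc r. H x - H (nbrs x ! j)) = (H x - H (nbrs x ! 0)) + rotor_potential nbrs H x r"
    unfolding rotor_potential_def by (simp only: sum.lessThan_Suc_shift)
  then show ?thesis using assms(2) wrap by (simp add: rotor_potential_def r'_def)
qed

lemma config_potential_update:
  assumes "finite V" "x \<in> V"
  shows "config_potential V nbrs H (rho(x := a))
    = config_potential V nbrs H rho - rotor_potential nbrs H x (rho x) + rotor_potential nbrs H x a"
  using assms by (simp add: config_potential_def sum.remove)

lemma rotor_potential_diff_le:
  assumes "a \<le> b" "b < length (nbrs u)"
  shows "\<bar>rotor_potential nbrs H u b - rotor_potential nbrs H u a\<bar>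
    \<le> (\<Sum>j<length (nbrs u). \<bar>H u - H (nbrs u ! j)\<bar>)"
proof -
  let ?f = "\<lambda>j. H u - H (nbrs u ! j)"
  have "rotor_potential nbrs H u b = rotor_potential nbrs H u a + (\<Sum>j\<in>{a..<b}. ?f (Suc j))"
    unfolding rotor_potential_def using assms(1)
    by (simp add: lessThan_atLeast0 sum.atLeastLessThan_concat)
  then have "\<bar>rotor_potential nbrs H u b - rotor_potential nbrs H u a\<bar> = \<bar>\<Sum>j\<in>{a..<b}. ?f (Suc j)\<bar>"
    by simp
  also have "\<dots> \<le> (\<Sum>j\<in>{a..<b}. \<bar>?f (Suc j)\<bar>)" by (rule sum_abs)
  also have "\<dots> = (\<Sum>j\<in>{Suc a..<Suc b}. \<bar>?f j\<bar>)" by (simp only: sum.shift_bounds_Suc_ivl)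
  also have "\<dots> \<le> (\<Sum>j<length (nbrs u). \<bar>?f j\<bar>)" by (rule sum_mono2) (use assms in auto)
  finally show ?thesis .
qed

lemma config_potential_diff_le:
  assumes "finite_graph V E" "cyclic_orders V E nbrs"
    and "valid_rotors V nbrs rho" "valid_rotors V nbrs rho'"
  shows "\<bar>config_potential V nbrs H rho - config_potential V nbrs H rho'\<bar>
    \<le> (\<Sum>u\<in>V. \<Sum>v\<in>{v. E u v}. \<bar>H u - H v\<bar>)"
proof -
  let ?w = "rotor_potential nbrs H"
  have "\<bar>config_potential V nbrs H rho - config_potential V nbrs H rho'\<bar>
      = \<bar>\<Sum>u\<in>V. ?w u (rho u) - ?w u (rho' u)\<bar>"
    by (simp add: config_potential_def sum_subtractf)
  also have "\<dots> \<le> (\<Sum>u\<in>V. \<bar>?w u (rho u) - ?w u (rho' u)\<bar>)" by (rule sum_abs)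
  also have "\<dots> \<le> (\<Sum>u\<in>V. \<Sum>v\<in>{v. E u v}. \<bar>H u - H v\<bar>)"
  proof (rule sum_mono)
    fix u assume u: "u \<in> V"
    have r: "rho u < length (nbrs u)" "rho' u < length (nbrs u)"
      using u assms(3,4) unfolding valid_rotors_def by auto
    have dist: "distinct (nbrs u)" and nb: "set (nbrs u) = {v. E u v}"
      using assms(2) u unfolding cyclic_orders_def by auto
    have "\<bar>?w u (rho u) - ?w u (rho' u)\<bar> \<le> (\<Sum>j<length (nbrs u). \<bar>H u - H (nbrs u ! j)\<bar>)"
      using rotor_potential_diff_le[of "rho u" "rho' u" nbrs u H]
        rotor_potential_diff_le[of "rho' u" "rho u" nbrs u H] r
      by (cases "rho u \<le> rho' u") (auto simp: abs_minus_commute)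
    also have "\<dots> = (\<Sum>v\<in>{v. E u v}. \<bar>H u - H v\<bar>)"
      using sum_nth_distinct[OF dist, of "\<lambda>v. \<bar>H u - H v\<bar>"] nb by simp
    finally show "\<bar>?w u (rho u) - ?w u (rho' u)\<bar> \<le> (\<Sum>v\<in>{v. E u v}. \<bar>H u - H v\<bar>)" .
  qed
  finally show ?thesis .
qed

section \<open>The conservation law for rotor walks\<close>

lemma rotor_step_valid:
  assumes "finite_graph V E" "cyclic_orders V E nbrs" "x \<in> V" "valid_rotors V nbrs rho"
  defines "k \<equiv> Suc (rho x) mod length (nbrs x)"
  shows "nbrs x ! k \<in> V" "valid_rotors V nbrs (rho(x := k))"
proof -
  have "rho x < length (nbrs x)" using assms(3,4) unfolding valid_rotors_def by auto
  then have k: "k < length (nbrs x)" unfolding k_def by (intro mod_less_divisor) linarith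
  have "set (nbrs x) = {v. E x v}" using assms(2,3) unfolding cyclic_orders_def by auto
  then show "nbrs x ! k \<in> V"
    using k assms(1) unfolding finite_graph_def by (metis mem_Collect_eq nth_mem)
  show "valid_rotors V nbrs (rho(x := k))" using assms(4) k unfolding valid_rotors_def by auto
qed

lemma rwalk_conservation:
  assumes "rwalk nbrs Z rho x z rho'" "finite_graph V E" "cyclic_orders V E nbrs" "Y \<subseteq> Z"
    "x \<in> V" "valid_rotors V nbrs rho"
  defines "H \<equiv> hitprob E Z Y"
  shows "z \<in> Z \<and> valid_rotors V nbrs rho' \<and>
    config_potential V nbrs H rho + H x = config_potential V nbrs H rho' + H z"
  using assms(1,5,6)
proof (induction rule: rwalk.induct)
  case (stop x rho)
  then show ?case by simp
next
  case (move x rho z rho')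
  define k where "k = Suc (rho x) mod length (nbrs x)"
  have step: "nbrs x ! k \<in> V" "valid_rotors V nbrs (rho(x := k))"
    using rotor_step_valid[OF assms(2,3) move.prems] unfolding k_def by auto
  have IH: "z \<in> Z \<and> valid_rotors V nbrs rho' \<and>
    config_potential V nbrs H (rho(x := k)) + H (nbrs x ! k) = config_potential V nbrs H rho' + H z"
    using move.IH step unfolding k_def by blast
  have rx: "rho x < length (nbrs x)" using move.prems unfolding valid_rotors_def by auto
  have dist: "distinct (nbrs x)" and nb: "set (nbrs x) = {v. E x v}"
    using assms(3) move.prems unfolding cyclic_orders_def by auto
  have "card {v. E x v} = length (nbrs x)" using dist nb distinct_card by metis
  then have harmonic: "H x = (\<Sum>v\<in>{v. E x v}. H v) / real (card {v. E x v})"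
    unfolding H_def by (intro hitprob_harmonic) (use assms(4) move.hyps rx in auto)
  have "nbrs x \<noteq> []" using rx by auto
  then have "(\<Sum>j<length (nbrs x). H x - H (nbrs x ! j)) = 0"
    by (rule harmonic_deviations_sum_zero[OF dist nb _ harmonic])
  then have "rotor_potential nbrs H x k = rotor_potential nbrs H x (rho x) + H x - H (nbrs x ! k)"
    unfolding k_def by (rule rotor_potential_advance[where nbrs = nbrs and x = x, OF rx])
  moreover have "finite V" using assms(2) unfolding finite_graph_def by auto
  ultimately show ?case using IH config_potential_update[OF _ move.prems(1)] by simp
qed

lemma rrun_conservation:
  assumes "rrun nbrs Z Y rho xs c rho'" "finite_graph V E" "cyclic_orders V E nbrs" "Y \<subseteq> Z"
    "set xs \<subseteq> V" "valid_rotors V nbrs rho"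
  defines "H \<equiv> hitprob E Z Y"
  shows "valid_rotors V nbrs rho' \<and>
    real c + config_potential V nbrs H rho' = sum_list (map H xs) + config_potential V nbrs H rho"
  using assms(1,5,6)
proof (induction rule: rrun.induct)
  case (nil rho)
  then show ?case by simp
next
  case (cons rho x z rho1 xs c rho2)
  have walk: "z \<in> Z \<and> valid_rotors V nbrs rho1 \<and>
    config_potential V nbrs H rho + H x = config_potential V nbrs H rho1 + H z"
    unfolding H_def by (rule rwalk_conservation[OF cons.hyps(1) assms(2,3,4)]) (use cons.prems in auto)
  then have "H z = (if z \<in> Y then 1 else 0)" by (simp add: H_def hitprob_boundary)
  with walk cons.IH cons.prems show ?case by auto
qed

lemma sum_list_map_count:
  assumes "finite V" "set xs \<subseteq> V"
  shows "sum_list (map f xs) = (\<Sum>x\<in>V. real (count_list xs x) * f x)"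
  using assms(2)
proof (induction xs)
  case Nil
  then show ?case by simp
next
  case (Cons a xs)
  have "(\<Sum>x\<in>V. real (count_list (a # xs) x) * f x)
      = (\<Sum>x\<in>V. real (count_list xs x) * f x + (if a = x then f x else 0))"
    by (rule sum.cong) (auto simp: algebra_simps)
  also have "\<dots> = (\<Sum>x\<in>V. real (count_list xs x) * f x) + f a"
    using Cons.prems assms(1) by (simp add: sum.distrib)
  finally show ?case using Cons by simp
qed

lemma rrun_discrepancy_le:
  assumes run: "rrun nbrs Z Y rho xs c rho'"
    and G: "finite_graph V E" and cyc: "cyclic_orders V E nbrs" and "Y \<subseteq> Z"
    and xs: "set xs \<subseteq> V" and val: "valid_rotors V nbrs rho"
    and s: "\<forall>x\<in>V. count_list xs x = s x"
  shows "\<bar>real c - Hw V E Z Y s\<bar> \<le> (\<Sum>u\<in>V. \<Sum>v\<in>{v. E u v}. \<bar>hitprob E Z Y u - hitprob E Z Y v\<bar>)"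
proof -
  let ?H = "hitprob E Z Y" and ?P = "config_potential V nbrs (hitprob E Z Y)"
  have cons: "valid_rotors V nbrs rho' \<and> real c + ?P rho' = sum_list (map ?H xs) + ?P rho"
    using rrun_conservation[OF assms(1-6)] by simp
  have "finite V" using G unfolding finite_graph_def by auto
  then have "sum_list (map ?H xs) = (\<Sum>x\<in>V. real (count_list xs x) * ?H x)"
    using sum_list_map_count xs by blast
  also have "\<dots> = Hw V E Z Y s" unfolding Hw_def using s by (intro sum.cong) auto
  finally have "sum_list (map ?H xs) = Hw V E Z Y s" .
  then have "real c - Hw V E Z Y s = ?P rho - ?P rho'" using cons by linarith
  then show ?thesis using config_potential_diff_le[OF G cyc val] cons by simp
qed

section \<open>Rotor walks reach the sink\<close>

fun visits :: "(nat \<Rightarrow> 'a) \<Rightarrow> 'a \<Rightarrow> nat \<Rightarrow> nat" where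
  "visits p u 0 = 0"
| "visits p u (Suc n) = visits p u n + (if p n = u then 1 else 0)"

lemma visits_mono: "m \<le> n \<Longrightarrow> visits p u m \<le> visits p u n"
  by (induction n) (auto simp: le_Suc_eq)

lemma visits_unbounded: assumes "\<exists>\<^sub>\<infinity>n. p n = u" shows "\<exists>n. k \<le> visits p u n"
proof (induction k)
  case (Suc k)
  then obtain n where n: "k \<le> visits p u n" by blast
  obtain m where m: "m \<ge> n" "p m = u" using assms unfolding INFM_nat_le by blast
  have "Suc k \<le> visits p u (Suc m)" using n m visits_mono[OF m(1), of p u] by simp
  then show ?case by blast
qed simp

text \<open>Visit counts grow by one at a time, so every value above the current count is the
  count at some later visit.\<close>
lemma visits_attained:
  assumes "\<exists>\<^sub>\<infinity>n. p n = u" "visits p u N \<le> K"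
  shows "\<exists>t\<ge>N. p t = u \<and> visits p u t = K"
proof -
  obtain n where n: "K < visits p u n"
    using visits_unbounded[OF assms(1), of "Suc K"] by (auto simp: Suc_le_eq)
  define T where "T = (LEAST t. K < visits p u t)"
  have T: "K < visits p u T" unfolding T_def using n by (rule LeastI)
  then obtain t where t: "T = Suc t" by (cases T) auto
  have "\<not> K < visits p u t" unfolding T_def by (rule not_less_Least) (use t T_def in simp)
  then have "visits p u t = K" "p t = u" using T t by (auto split: if_splits)
  moreover have "t \<ge> N"
    using visits_mono[of "Suc t" N p u] T t assms(2) by (cases "t \<ge> N") auto
  ultimately show ?thesis by blast
qed

lemma visits_residue_frequent:
  assumes "\<exists>\<^sub>\<infinity>n. p n = u" "0 < d" "i < d"
  shows "\<exists>\<^sub>\<infinity>t. p t = u \<and> (r + visits p u t) mod d = i"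
  unfolding INFM_nat_le
proof
  fix N
  define K where "K = d * (visits p u N + r + 1) + i - r"
  have "visits p u N + r + 1 \<le> d * (visits p u N + r + 1)" using assms(2) by (cases d) auto
  then have K: "r + K = i + d * (visits p u N + r + 1)" "visits p u N \<le> K"
    unfolding K_def by linarith+
  obtain t where "t \<ge> N" "p t = u" "visits p u t = K" using visits_attained[OF assms(1) K(2)] by blast
  moreover have "(r + K) mod d = i" using K(1) assms(3) by (metis mod_mult_self2 mod_less)
  ultimately show "\<exists>t\<ge>N. p t = u \<and> (r + visits p u t) mod d = i" by blast
qed

lemma rotor_trajectory_spreads:
  assumes pos: "\<And>n. pos (Suc n) = nbrs (pos n) ! (Suc (rot n (pos n)) mod length (nbrs (pos n)))"
    and rot: "\<And>n. rot (Suc n) = (rot n)(pos n := Suc (rot n (pos n)) mod length (nbrs (pos n)))"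
    and valid: "rot 0 u < length (nbrs u)" and freq: "\<exists>\<^sub>\<infinity>n. pos n = u"
    and i: "i < length (nbrs u)"
  shows "\<exists>\<^sub>\<infinity>n. pos n = nbrs u ! i"
proof -
  let ?d = "length (nbrs u)"
  have rot_u: "rot n u = (rot 0 u + visits pos u n) mod ?d" for n
    by (induction n) (use valid in \<open>auto simp: rot mod_Suc_eq\<close>)
  have "0 < ?d" using i by linarith
  then have "\<exists>\<^sub>\<infinity>t. pos t = u \<and> (Suc (rot 0 u) + visits pos u t) mod ?d = i"
    using visits_residue_frequent[OF freq _ i, where r = "Suc (rot 0 u)"] by simp
  then have emit: "\<exists>\<^sub>\<infinity>t. pos (Suc t) = nbrs u ! i"
  proof (rule INFM_mono)
    fix t assume "pos t = u \<and> (Suc (rot 0 u) + visits pos u t) mod ?d = i"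
    moreover have "rot t u = (rot 0 u + visits pos u t) mod ?d" by (rule rot_u)
    ultimately show "pos (Suc t) = nbrs u ! i" by (simp add: pos mod_Suc_eq)
  qed
  show ?thesis unfolding INFM_nat_le
  proof
    fix m
    obtain t where "t \<ge> m" "pos (Suc t) = nbrs u ! i" using emit unfolding INFM_nat_le by blast
    then show "\<exists>n\<ge>m. pos n = nbrs u ! i" using le_SucI by blast
  qed
qed

definition rotor_step :: "('a \<Rightarrow> 'a list) \<Rightarrow> ('a \<Rightarrow> nat) \<times> 'a \<Rightarrow> ('a \<Rightarrow> nat) \<times> 'a" where
  "rotor_step nbrs st = (let (rho, x) = st; k = Suc (rho x) mod length (nbrs x)
                         in (rho(x := k), nbrs x ! k))"

lemma rotor_step_Pair [simp]:
  "rotor_step nbrs (rho, x)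
     = (rho(x := Suc (rho x) mod length (nbrs x)), nbrs x ! (Suc (rho x) mod length (nbrs x)))"
  by (simp add: rotor_step_def Let_def)

lemma rwalk_if_reaches:
  "(\<forall>m<n. snd ((rotor_step nbrs ^^ m) st) \<notin> Z) \<Longrightarrow> snd ((rotor_step nbrs ^^ n) st) \<in> Z
   \<Longrightarrow> \<exists>z rho'. rwalk nbrs Z (fst st) (snd st) z rho'"
proof (induction n arbitrary: st)
  case 0
  then show ?case using rwalk.stop by fastforce
next
  case (Suc n)
  have "\<forall>m<n. snd ((rotor_step nbrs ^^ m) (rotor_step nbrs st)) \<notin> Z"
    using Suc.prems(1) by (metis Suc_mono funpow_Suc_right o_apply)
  moreover have "snd ((rotor_step nbrs ^^ n) (rotor_step nbrs st)) \<in> Z"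
    using Suc.prems(2) by (simp only: funpow_Suc_right o_apply)
  ultimately obtain z rho' where
    "rwalk nbrs Z (fst (rotor_step nbrs st)) (snd (rotor_step nbrs st)) z rho'"
    using Suc.IH by blast
  moreover have "snd st \<notin> Z" using Suc.prems(1) by (metis funpow_0 zero_less_Suc)
  ultimately show ?case by (cases st) (auto intro: rwalk.move)
qed

lemma rotor_steps_valid:
  assumes "finite_graph V E" "cyclic_orders V E nbrs" "x \<in> V" "valid_rotors V nbrs rho"
  shows "snd ((rotor_step nbrs ^^ n) (rho, x)) \<in> V \<and>
    valid_rotors V nbrs (fst ((rotor_step nbrs ^^ n) (rho, x)))"
proof (induction n)
  case 0
  then show ?case using assms by simp
next
  case (Suc n)
  obtain rho' x' where st: "(rotor_step nbrs ^^ n) (rho, x) = (rho', x')" by fastforce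
  then have "(rotor_step nbrs ^^ Suc n) (rho, x) = (rho'(x' := Suc (rho' x') mod length (nbrs x')),
      nbrs x' ! (Suc (rho' x') mod length (nbrs x')))"
    by simp
  moreover have "x' \<in> V" "valid_rotors V nbrs rho'" using Suc st by auto
  ultimately show ?case using rotor_step_valid[OF assms(1,2)] by (metis fst_conv snd_conv)
qed

text \<open>On a finite connected graph every rotor-router trajectory hits a nonempty \<open>Z \<subseteq> V\<close>:
  otherwise some vertex is visited infinitely often, hence, spreading along edges, so is
  every vertex, including one in \<open>Z\<close>.\<close>
lemma rotor_steps_reach:
  assumes G: "finite_graph V E" and conn: "connected_graph V E" and cyc: "cyclic_orders V E nbrs"
    and z0: "z0 \<in> Z" "z0 \<in> V" and x: "x \<in> V" and val: "valid_rotors V nbrs rho"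
  shows "\<exists>n. snd ((rotor_step nbrs ^^ n) (rho, x)) \<in> Z"
proof (rule ccontr)
  define pos where "pos n = snd ((rotor_step nbrs ^^ n) (rho, x))" for n
  define rot where "rot n = fst ((rotor_step nbrs ^^ n) (rho, x))" for n
  assume "\<not> ?thesis"
  then have avoid: "pos n \<noteq> z0" for n using z0(1) unfolding pos_def by blast
  have inv: "pos n \<in> V" "valid_rotors V nbrs (rot n)" for n
    using rotor_steps_valid[OF G cyc x val] unfolding pos_def rot_def by auto
  have step: "(rotor_step nbrs ^^ Suc n) (rho, x) = rotor_step nbrs (rot n, pos n)" for n
    by (simp add: rot_def pos_def)
  have pos_Suc: "pos (Suc n) = nbrs (pos n) ! (Suc (rot n (pos n)) mod length (nbrs (pos n)))"
    and rot_Suc: "rot (Suc n) = (rot n)(pos n := Suc (rot n (pos n)) mod length (nbrs (pos n)))"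
    for n using step[of n] unfolding pos_def[of "Suc n"] rot_def[of "Suc n"]
    by simp_all
  have edge: "\<exists>\<^sub>\<infinity>n. pos n = v" if "u \<in> V" "\<exists>\<^sub>\<infinity>n. pos n = u" "E u v" for u v
  proof -
    have "set (nbrs u) = {v. E u v}" using cyc \<open>u \<in> V\<close> unfolding cyclic_orders_def by auto
    then obtain i where "i < length (nbrs u)" "nbrs u ! i = v"
      using \<open>E u v\<close> by (metis in_set_conv_nth mem_Collect_eq)
    moreover have "rot 0 u < length (nbrs u)"
      using inv(2)[of 0] \<open>u \<in> V\<close> unfolding valid_rotors_def by auto
    ultimately show ?thesis using rotor_trajectory_spreads[of pos nbrs rot, OF pos_Suc rot_Suc] that(2) by blast
  qed
  have "finite V" using G unfolding finite_graph_def by blast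
  moreover have "\<exists>\<^sub>\<infinity>n. \<exists>u\<in>V. pos n = u" using inv(1) by simp
  ultimately obtain u0 where u0: "u0 \<in> V" "\<exists>\<^sub>\<infinity>n. pos n = u0"
    using INFM_finite_Bex_distrib[of V "\<lambda>u n. pos n = u"] by blast
  have "E\<^sup>*\<^sup>* u0 z0" using conn u0(1) z0(2) unfolding connected_graph_def by blast
  then have "z0 \<in> V \<and> (\<exists>\<^sub>\<infinity>n. pos n = z0)"
  proof (induction rule: rtranclp_induct)
    case (step y z)
    have "z \<in> V" using G step.hyps(2) unfolding finite_graph_def by blast
    then show ?case using edge[OF _ _ step.hyps(2)] step.IH by blast
  qed (use u0 in simp)
  then show False using avoid by (simp add: INFM_nat_le)
qed

lemma rwalk_exists:
  assumes "finite_graph V E" "connected_graph V E" "cyclic_orders V E nbrs"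
    and "z0 \<in> Z" "z0 \<in> V" "x \<in> V" "valid_rotors V nbrs rho"
  shows "\<exists>z rho'. rwalk nbrs Z rho x z rho'"
proof -
  let ?hits = "\<lambda>n. snd ((rotor_step nbrs ^^ n) (rho, x)) \<in> Z"
  obtain n where "?hits n" using rotor_steps_reach[OF assms] by blast
  then have "?hits (LEAST n. ?hits n)" and "\<forall>m<(LEAST n. ?hits n). \<not> ?hits m"
    by (auto intro: LeastI dest: not_less_Least)
  then show ?thesis using rwalk_if_reaches[of "LEAST n. ?hits n" nbrs "(rho, x)" Z] by simp
qed

lemma rrun_exists:
  assumes G: "finite_graph V E" and conn: "connected_graph V E" and cyc: "cyclic_orders V E nbrs"
    and z0: "z0 \<in> Z" "z0 \<in> V" and YZ: "Y \<subseteq> Z"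
  shows "set xs \<subseteq> V \<Longrightarrow> valid_rotors V nbrs rho \<Longrightarrow> \<exists>c rho'. rrun nbrs Z Y rho xs c rho'"
proof (induction xs arbitrary: rho)
  case Nil
  then show ?case using rrun.nil by blast
next
  case (Cons x xs)
  obtain z rho1 where walk: "rwalk nbrs Z rho x z rho1"
    using rwalk_exists[OF G conn cyc z0, of x rho] Cons.prems by auto
  have "valid_rotors V nbrs rho1"
    using rwalk_conservation[OF walk G cyc YZ] Cons.prems by auto
  then have "\<exists>c rho'. rrun nbrs Z Y rho1 xs c rho'" using Cons.IH Cons.prems by simp
  then obtain c rho' where "rrun nbrs Z Y rho1 xs c rho'" by blast
  then show ?case using rrun.cons[OF walk] by blast
qed

theorem mainTheorem12:
  fixes V :: "'a set" and E :: "'a \<Rightarrow> 'a \<Rightarrow> bool" and Y Z :: "'a set"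
    and s :: "'a \<Rightarrow> nat" and nbrs :: "'a \<Rightarrow> 'a list" and rho :: "'a \<Rightarrow> nat"
    and xs :: "'a list"
  assumes "finite_graph V E" and "connected_graph V E"
    and "Y \<noteq> {}" and "Y \<subseteq> Z" and "Z \<subseteq> V"
    and "cyclic_orders V E nbrs" and "valid_rotors V nbrs rho"
    and "set xs \<subseteq> V" and "\<forall>x\<in>V. count_list xs x = s x"
  shows "(\<exists>c rho'. rrun nbrs Z Y rho xs c rho') \<and>
         (\<forall>c rho'. rrun nbrs Z Y rho xs c rho' \<longrightarrow>
            \<bar>real c - Hw V E Z Y s\<bar> \<le>
              (\<Sum>u\<in>V. \<Sum>v\<in>{v. E u v}. \<bar>hitprob E Z Y u - hitprob E Z Y v\<bar>))"
proof (intro conjI allI impI)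
  obtain z0 where z0: "z0 \<in> Z" "z0 \<in> V" using assms(3,4,5) by blast
  show "\<exists>c rho'. rrun nbrs Z Y rho xs c rho'"
    by (rule rrun_exists[OF assms(1,2,6) z0 assms(4,8,7)])
  fix c rho' assume "rrun nbrs Z Y rho xs c rho'"
  then show "\<bar>real c - Hw V E Z Y s\<bar> \<le>
      (\<Sum>u\<in>V. \<Sum>v\<in>{v. E u v}. \<bar>hitprob E Z Y u - hitprob E Z Y v\<bar>)"
    by (rule rrun_discrepancy_le[OF _ assms(1,6,4,8,7,9)])
qed

end
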